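(* A (finite) maximal triangle-free graph on at least two vertices contains no induced cycle of length six if and only if it is a blow-up of some Andrásfai graph $\Gamma_k$, $k\ge1$.
   Context: A graph is maximal triangle-free if it contains no triangle but adding any new edge creates a triangle. A blow-up of $H$ is any graph obtained by replacing each vertex of $H$ by a non-empty independent set and each edge of $H$ by the complete bipartite graph between the corresponding sets, with no further edges. Andrásfai graph $\Gamma_k$: vertex set $\mathbb Z/(3k-1)\mathbb Z$, $ij$ an edge iff $i-j\in\{k,\dots,2k-1\}$ mod $3k-1$. *)

theory Defs
  imports Main
begin

definition simple_graph :: "'a set \<Rightarrow> ('a \<Rightarrow> 'a \<Rightarrow> bool) \<Rightarrow> bool" where
  "simple_graph V E \<longleftrightarrow> finite V \<and>
     (\<forall>x y. E x y \<longrightarrow> x \<in> V \<and> y \<in> V) \<and>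
     (\<forall>x y. E x y \<longrightarrow> E y x) \<and> (\<forall>x. \<not> E x x)"

definition triangle_free :: "'a set \<Rightarrow> ('a \<Rightarrow> 'a \<Rightarrow> bool) \<Rightarrow> bool" where
  "triangle_free V E \<longleftrightarrow>
     \<not> (\<exists>x\<in>V. \<exists>y\<in>V. \<exists>z\<in>V. E x y \<and> E y z \<and> E x z)"

definition maximal_triangle_free :: "'a set \<Rightarrow> ('a \<Rightarrow> 'a \<Rightarrow> bool) \<Rightarrow> bool" where
  "maximal_triangle_free V E \<longleftrightarrow> triangle_free V E \<and>
     (\<forall>x\<in>V. \<forall>y\<in>V. x \<noteq> y \<and> \<not> E x y \<longrightarrow> (\<exists>z\<in>V. E x z \<and> E y z))"

definition has_induced_C6 :: "'a set \<Rightarrow> ('a \<Rightarrow> 'a \<Rightarrow> bool) \<Rightarrow> bool" where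
  "has_induced_C6 V E \<longleftrightarrow> (\<exists>c :: nat \<Rightarrow> 'a.
     inj_on c {0..<6} \<and> c ` {0..<6} \<subseteq> V \<and>
     (\<forall>i<6. \<forall>j<6. E (c i) (c j) \<longleftrightarrow> (j = (i + 1) mod 6 \<or> i = (j + 1) mod 6)))"

definition andrasfai_vertices :: "nat \<Rightarrow> nat set" where
  "andrasfai_vertices k = {0..<3*k - 1}"

definition andrasfai_edge :: "nat \<Rightarrow> nat \<Rightarrow> nat \<Rightarrow> bool" where
  "andrasfai_edge k i j \<longleftrightarrow> i \<in> andrasfai_vertices k \<and> j \<in> andrasfai_vertices k \<and>
     (let d = (int i - int j) mod int (3*k - 1) in int k \<le> d \<and> d \<le> int (2*k - 1))"

text \<open>G = (V,E) is a blow-up of H = (W,F): there is a map f from V onto W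
  (its fibres are the non-empty parts) such that x,y are adjacent in G iff
  f x, f y are adjacent in H. Since F is irreflexive, each fibre is independent.\<close>
definition is_blowup_of :: "'a set \<Rightarrow> ('a \<Rightarrow> 'a \<Rightarrow> bool) \<Rightarrow> 'b set \<Rightarrow> ('b \<Rightarrow> 'b \<Rightarrow> bool) \<Rightarrow> bool" where
  "is_blowup_of V E W F \<longleftrightarrow> (\<exists>f. f ` V = W \<and>
     (\<forall>x\<in>V. \<forall>y\<in>V. E x y \<longleftrightarrow> F (f x) (f y)))"

end

theory Submission
  imports Defs
begin

text \<open>A blow-up of \<open>\<Gamma>\<^sub>k\<close> has no induced hexagon, since the six vertices of an
  induced hexagon have distinct neighbourhoods on it and would give one in \<open>\<Gamma>\<^sub>k\<close>. But
  \<open>\<Gamma>\<^sub>k\<close> is the graph on \<open>0, \<dots>, 3k - 2\<close> with \<open>i \<sim> j\<close> iff \<open>|i - j| \<equiv> 1 (mod 3)\<close>, and in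
  this picture the largest vertex of a hexagon fixes the residues of the others, after which
  the edges and non-edges impose a cyclic chain of inequalities.

  Conversely, in a maximal triangle-free graph without induced hexagon no three vertices can
  have pairwise private common neighbours. Hence a common neighbour \<open>v\<close> of a non-adjacent pair
  \<open>u, w\<close> with fewest common neighbours gives an edge \<open>uv\<close> meeting the neighbourhood of every
  edge, and colouring by "adjacent to \<open>v\<close>", "adjacent to \<open>u\<close>" and "neither" is a proper
  3-colouring constant on twins. Within a colour class the neighbourhoods in another class
  form a chain; this yields a linear order of the twin classes in which the colour is the
  position mod 3 and two vertices are adjacent exactly as in the line picture of
  \<open>\<Gamma>\<^sub>k\<close>, \<open>3k - 1\<close> being the number of twin classes.\<close>

section \<open>Residues modulo 3\<close>

definition succ3 :: "nat \<Rightarrow> nat" where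
  "succ3 r = Suc r mod 3"

lemma less_3_cases: "r < (3::nat) \<Longrightarrow> r = 0 \<or> r = 1 \<or> r = 2"
  by auto

lemma succ3_mod: "succ3 (p mod 3) = Suc p mod 3"
  by (simp add: succ3_def mod_Suc_eq)

lemma succ3_less: "succ3 r < 3"
  by (simp add: succ3_def)

lemma succ3_neq:
  assumes "r < 3"
  shows "succ3 r \<noteq> r"
  using less_3_cases[OF assms] by (elim disjE) (simp_all add: succ3_def)

lemma succ3_succ3_neq:
  assumes "r < 3"
  shows "succ3 (succ3 r) \<noteq> r"
  using less_3_cases[OF assms] by (elim disjE) (simp_all add: succ3_def)

lemma succ3_cube: "r < 3 \<Longrightarrow> succ3 (succ3 (succ3 r)) = r"
  using less_3_cases[of r] by (auto simp: succ3_def)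

lemma succ3_inj: "r < 3 \<Longrightarrow> s < 3 \<Longrightarrow> succ3 r = succ3 s \<longleftrightarrow> r = s"
  using less_3_cases[of r] less_3_cases[of s] by (auto simp: succ3_def)

lemma succ3_cycle: "r < 3 \<Longrightarrow> s = succ3 r \<Longrightarrow> t = succ3 s \<Longrightarrow> r = succ3 t"
  using succ3_cube by simp

lemma succ3_cases:
  assumes "r < 3" "s < 3"
  obtains "s = r" | "s = succ3 r" | "r = succ3 s"
  using less_3_cases[OF assms(1)] less_3_cases[OF assms(2)] that by (auto simp: succ3_def)

lemma third_residue:
  "a < 3 \<Longrightarrow> b < 3 \<Longrightarrow> c < 3 \<Longrightarrow> d < (3::nat) \<Longrightarrow> a \<noteq> b \<Longrightarrow> c \<noteq> a \<Longrightarrow> c \<noteq> b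
   \<Longrightarrow> d \<noteq> a \<Longrightarrow> d \<noteq> b \<Longrightarrow> c = d"
  by auto

section \<open>The Andrasfai graphs on a line\<close>

text \<open>The Andrasfai graph \<open>\<Gamma>\<^sub>k\<close> laid out on the line \<open>{0..<3k-1}\<close>: \<open>p\<close> and \<open>q\<close> are
  adjacent iff \<open>|p - q| \<equiv> 1 (mod 3)\<close>, i.e. the residue mod 3 goes up by one along
  every edge, read from the smaller to the larger end.\<close>
definition lin_adj :: "nat \<Rightarrow> nat \<Rightarrow> bool" where
  "lin_adj p q \<longleftrightarrow>
     (p < q \<and> q mod 3 = succ3 (p mod 3)) \<or> (q < p \<and> p mod 3 = succ3 (q mod 3))"

lemma lin_adj_sym: "lin_adj p q \<longleftrightarrow> lin_adj q p"
  unfolding lin_adj_def by auto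

lemma lin_adj_iff_less: "q mod 3 = succ3 (p mod 3) \<Longrightarrow> lin_adj p q \<longleftrightarrow> p < q"
  unfolding lin_adj_def
  by (metis less_asym mod_less_divisor succ3_cube succ3_succ3_neq zero_less_numeral)

lemma not_lin_adj_same_mod: "p mod 3 = q mod 3 \<Longrightarrow> \<not> lin_adj p q"
  unfolding lin_adj_def using succ3_neq[of "p mod 3"] by auto

abbreviation cyc6_adj :: "nat \<Rightarrow> nat \<Rightarrow> bool" where
  "cyc6_adj i j \<equiv> j = (i + 1) mod 6 \<or> i = (j + 1) mod 6"

lemma less_6_cases: "i < (6::nat) \<Longrightarrow> i = 0 \<or> i = 1 \<or> i = 2 \<or> i = 3 \<or> i = 4 \<or> i = 5"
  by auto

lemma cyc6_adj_rotate:
  assumes "i < 6" "j < 6" "s < 6"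
  shows "cyc6_adj ((i + s) mod 6) ((j + s) mod 6) \<longleftrightarrow> cyc6_adj i j"
  using less_6_cases[OF assms(1)] less_6_cases[OF assms(2)] less_6_cases[OF assms(3)]
  by (elim disjE) simp_all

lemma cyc6_adj_rows_distinct:
  assumes "i < 6" "j < 6" "\<forall>l<6. cyc6_adj i l \<longleftrightarrow> cyc6_adj j l"
  shows "i = j"
proof -
  have "(i + 1) mod 6 < 6" "(i + 5) mod 6 < 6"
    by simp_all
  with assms(3) have "cyc6_adj i ((i + 1) mod 6) \<longleftrightarrow> cyc6_adj j ((i + 1) mod 6)"
      "cyc6_adj i ((i + 5) mod 6) \<longleftrightarrow> cyc6_adj j ((i + 5) mod 6)"
    by blast+
  then show ?thesis
    using less_6_cases[OF assms(1)] less_6_cases[OF assms(2)] by (elim disjE) simp_all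
qed

lemma hexagon_residues:
  assumes "r0 < 3" "r1 < 3" "r2 < 3" "r3 < 3" "r4 < 3" "r0 = succ3 r1"
    "r0 \<noteq> succ3 r2" "r0 \<noteq> succ3 r3" "r0 \<noteq> succ3 r4" "r2 \<noteq> r3" "r4 \<noteq> r3"
  shows "(r1 = succ3 r2 \<and> r1 = succ3 r4) \<or> (r2 = succ3 r1 \<and> r4 = succ3 r1)"
  using less_3_cases[OF assms(1)] less_3_cases[OF assms(2)] less_3_cases[OF assms(3)]
    less_3_cases[OF assms(4)] less_3_cases[OF assms(5)] assms(6-)
  unfolding succ3_def by auto

lemma lin_adj_no_induced_C6_below_top:
  assumes top: "a1 \<le> a0" "a2 \<le> a0" "a3 \<le> a0" "a4 \<le> a0" "a5 \<le> a0"
    and cycle: "lin_adj a0 a1" "lin_adj a1 a2" "lin_adj a2 a3" "lin_adj a3 a4" "lin_adj a4 a5"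
      "lin_adj a5 a0"
    and chords: "\<not> lin_adj a0 a2" "\<not> lin_adj a0 a3" "\<not> lin_adj a0 a4" "\<not> lin_adj a1 a4"
      "\<not> lin_adj a2 a5"
  shows False
proof -
  have lt3: "p mod 3 < 3" for p :: nat
    by simp
  have below_adj: "a0 mod 3 = succ3 (a mod 3)" if "a \<le> a0" "lin_adj a0 a" for a
    using that unfolding lin_adj_def by auto
  have below_nonadj: "a0 mod 3 \<noteq> succ3 (a mod 3)" if "a \<le> a0" "a \<noteq> a0" "\<not> lin_adj a0 a" for a
  proof
    assume "a0 mod 3 = succ3 (a mod 3)"
    then have "lin_adj a a0 \<longleftrightarrow> a < a0"
      by (rule lin_adj_iff_less)
    with that show False
      using lin_adj_sym by auto
  qed
  have r1: "a0 mod 3 = succ3 (a1 mod 3)"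
    by (rule below_adj[OF top(1) cycle(1)])
  have r5: "a0 mod 3 = succ3 (a5 mod 3)"
    using below_adj[OF top(5)] cycle(6) lin_adj_sym by blast
  have "a2 \<noteq> a0" "a3 \<noteq> a0" "a4 \<noteq> a0"
    using cycle chords lin_adj_sym by metis+
  then have r2: "a0 mod 3 \<noteq> succ3 (a2 mod 3)" and r3: "a0 mod 3 \<noteq> succ3 (a3 mod 3)"
    and r4: "a0 mod 3 \<noteq> succ3 (a4 mod 3)"
    using below_nonadj top chords by auto
  have r23: "a2 mod 3 \<noteq> a3 mod 3" and r34: "a4 mod 3 \<noteq> a3 mod 3"
    using cycle not_lin_adj_same_mod lin_adj_sym by metis+
  have r15: "a1 mod 3 = a5 mod 3"
    using r1 r5 succ3_inj lt3 by metis
  from hexagon_residues[OF lt3 lt3 lt3 lt3 lt3 r1 r2 r3 r4 r23 r34] show False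
  proof
    assume "a1 mod 3 = succ3 (a2 mod 3) \<and> a1 mod 3 = succ3 (a4 mod 3)"
    then have "a2 < a1" "a4 < a5" "\<not> a2 < a5" "\<not> a4 < a1"
      using lin_adj_iff_less r15 cycle chords lin_adj_sym by metis+
    then show False
      by linarith
  next
    assume "a2 mod 3 = succ3 (a1 mod 3) \<and> a4 mod 3 = succ3 (a1 mod 3)"
    then have "a1 < a2" "a5 < a4" "\<not> a5 < a2" "\<not> a1 < a4"
      using lin_adj_iff_less r15 cycle chords lin_adj_sym by metis+
    then show False
      by linarith
  qed
qed

lemma no_induced_C6_lin_adj: "\<not> has_induced_C6 V lin_adj"
proof
  assume "has_induced_C6 V lin_adj"
  then obtain c where c: "\<forall>i<6. \<forall>j<6. lin_adj (c i) (c j) \<longleftrightarrow> cyc6_adj i j"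
    unfolding has_induced_C6_def by blast
  have "Max (c ` {..<6}) \<in> c ` {..<6}"
    by (rule Max_in) (auto simp: lessThan_empty_iff)
  then obtain s where s: "s < 6" "c s = Max (c ` {..<6})"
    by auto
  define a where "a i = c ((i + s) mod 6)" for i
  have adj: "lin_adj (a i) (a j) \<longleftrightarrow> cyc6_adj i j" if "i < 6" "j < 6" for i j
    unfolding a_def using c cyc6_adj_rotate[OF that s(1)] by simp
  have top: "a i \<le> a 0" if "i < 6" for i
    unfolding a_def using s by simp
  show False
    using lin_adj_no_induced_C6_below_top[of "a 1" "a 0" "a 2" "a 3" "a 4" "a 5"] adj top by simp
qed

definition line_to_circ :: "nat \<Rightarrow> nat \<Rightarrow> nat" where
  "line_to_circ k p =
     (if p mod 3 = 0 then p div 3 else if p mod 3 = 1 then k + p div 3 else 2 * k + p div 3)"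

definition circ_to_line :: "nat \<Rightarrow> nat \<Rightarrow> nat" where
  "circ_to_line k i =
     (if i < k then 3 * i else if i < 2 * k then 3 * (i - k) + 1 else 3 * (i - 2 * k) + 2)"

lemma line_to_circ_circ_to_line:
  assumes "i < 3 * k - 1"
  shows "line_to_circ k (circ_to_line k i) = i"
proof -
  have digits: "(3 * j + r) mod 3 = r" "(3 * j + r) div 3 = j" if "r < 3" for j r :: nat
    using that by simp_all
  show ?thesis
    using assms digits[of 0] digits[of 1] digits[of 2]
    unfolding line_to_circ_def circ_to_line_def by auto
qed

lemma circ_to_line_less: "i < 3 * k - 1 \<Longrightarrow> circ_to_line k i < 3 * k - 1"
  unfolding circ_to_line_def by auto

lemma line_to_circ_less:
  assumes "p < 3 * k - 1"
  shows "line_to_circ k p < 3 * k - 1"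
proof -
  obtain a r where "p = 3 * a + r" "r < 3"
    by (metis div_mod_decomp mod_less_divisor zero_less_numeral mult.commute)
  moreover from this have "p div 3 = a" "p mod 3 = r"
    by auto
  ultimately show ?thesis
    unfolding line_to_circ_def using assms by auto
qed

lemma int_diff_mod_less:
  assumes "i < n" "j < n"
  shows "(int i - int j) mod int n = (if i < j then int i - int j + int n else int i - int j)"
proof (cases "i < j")
  case True
  then have "(int i - int j + int n) mod int n = int i - int j + int n"
    using assms by (intro mod_pos_pos_trivial) auto
  then show ?thesis
    using True by simp
qed (use assms in simp)

lemma andrasfai_edge_line_to_circ:
  assumes "p < 3 * k - 1" "q < 3 * k - 1"
  shows "andrasfai_edge k (line_to_circ k p) (line_to_circ k q) \<longleftrightarrow> lin_adj p q"
proof -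
  obtain a r where p: "p = 3 * a + r" "r < 3"
    by (metis div_mod_decomp mod_less_divisor zero_less_numeral mult.commute)
  obtain b s where q: "q = 3 * b + s" "s < 3"
    by (metis div_mod_decomp mod_less_divisor zero_less_numeral mult.commute)
  have digits: "p div 3 = a" "p mod 3 = r" "q div 3 = b" "q mod 3 = s"
    using p q by auto
  define i where "i = line_to_circ k p"
  define j where "j = line_to_circ k q"
  have ij: "i < 3 * k - 1" "j < 3 * k - 1"
    unfolding i_def j_def using line_to_circ_less assms by auto
  have i: "i = (if r = 0 then a else if r = 1 then k + a else 2 * k + a)"
    and j: "j = (if s = 0 then b else if s = 1 then k + b else 2 * k + b)"
    unfolding i_def j_def line_to_circ_def digits by simp_all
  have edge: "andrasfai_edge k i j \<longleftrightarrow>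
      int k \<le> (if i < j then int i - int j + int (3 * k - 1) else int i - int j) \<and>
      (if i < j then int i - int j + int (3 * k - 1) else int i - int j) \<le> int (2 * k - 1)"
    unfolding andrasfai_edge_def andrasfai_vertices_def Let_def int_diff_mod_less[OF ij]
    using ij by auto
  have lin: "lin_adj p q \<longleftrightarrow> (p < q \<and> s = succ3 r) \<or> (q < p \<and> r = succ3 s)"
    unfolding lin_adj_def digits ..
  have "k \<ge> 1"
    using assms by simp
  moreover have "r = 0 \<or> r = 1 \<or> r = 2" "s = 0 \<or> s = 1 \<or> s = 2"
    using p q by auto
  ultimately show ?thesis
    unfolding i_def[symmetric] j_def[symmetric] edge lin using i j p q assms
    by (elim disjE; simp add: succ3_def; linarith)
qed

section \<open>Blow-ups\<close>

lemma is_blowup_of_trans: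
  assumes "is_blowup_of U D V E" "is_blowup_of V E W F"
  shows "is_blowup_of U D W F"
proof -
  obtain f where f: "f ` U = V" "\<forall>x\<in>U. \<forall>y\<in>U. D x y \<longleftrightarrow> E (f x) (f y)"
    using assms(1) unfolding is_blowup_of_def by blast
  obtain g where g: "g ` V = W" "\<forall>x\<in>V. \<forall>y\<in>V. E x y \<longleftrightarrow> F (g x) (g y)"
    using assms(2) unfolding is_blowup_of_def by blast
  have "(g \<circ> f) ` U = W" "\<forall>x\<in>U. \<forall>y\<in>U. D x y \<longleftrightarrow> F ((g \<circ> f) x) ((g \<circ> f) y)"
    using f g by (auto simp: image_comp[symmetric])
  then show ?thesis
    unfolding is_blowup_of_def by blast
qed

text \<open>No identification is forced: distinct vertices of an induced \<open>C\<^sub>6\<close> have distinct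
  neighbourhoods on the cycle.\<close>
lemma has_induced_C6_blowup:
  assumes "is_blowup_of V E W F" "has_induced_C6 V E"
  shows "has_induced_C6 W F"
proof -
  obtain f where f: "f ` V = W" "\<forall>x\<in>V. \<forall>y\<in>V. E x y \<longleftrightarrow> F (f x) (f y)"
    using assms(1) unfolding is_blowup_of_def by blast
  obtain c where c: "c ` {0..<6} \<subseteq> V" "\<forall>i<6. \<forall>j<6. E (c i) (c j) \<longleftrightarrow> cyc6_adj i j"
    using assms(2) unfolding has_induced_C6_def by blast
  have adj: "F (f (c i)) (f (c j)) \<longleftrightarrow> cyc6_adj i j" if "i < 6" "j < 6" for i j
  proof -
    have "c i \<in> V" "c j \<in> V"
      using c(1) that by auto
    then show ?thesis
      using f(2) c(2) that by blast
  qed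
  have "inj_on (f \<circ> c) {0..<6}"
  proof (rule inj_onI)
    fix i j assume "i \<in> {0..<6}" "j \<in> {0..<6}" and eq: "(f \<circ> c) i = (f \<circ> c) j"
    then have ij: "i < 6" "j < 6"
      by simp_all
    have "cyc6_adj i l \<longleftrightarrow> cyc6_adj j l" if "l < 6" for l
    proof -
      have "cyc6_adj i l \<longleftrightarrow> F (f (c i)) (f (c l))"
        by (rule adj[OF ij(1) that, symmetric])
      also have "\<dots> \<longleftrightarrow> F (f (c j)) (f (c l))"
        using eq by simp
      also have "\<dots> \<longleftrightarrow> cyc6_adj j l"
        by (rule adj[OF ij(2) that])
      finally show ?thesis .
    qed
    then show "i = j"
      using cyc6_adj_rows_distinct[OF ij] by blast
  qed
  moreover have "(f \<circ> c) ` {0..<6} \<subseteq> W"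
    using c(1) f(1) by auto
  ultimately show ?thesis
    unfolding has_induced_C6_def using adj by (intro exI[of _ "f \<circ> c"]) simp
qed

lemma line_is_blowup_of_andrasfai:
  "is_blowup_of {0..<3 * k - 1} lin_adj (andrasfai_vertices k) (andrasfai_edge k)"
proof -
  have "line_to_circ k ` {0..<3 * k - 1} = {0..<3 * k - 1}"
  proof
    show "{0..<3 * k - 1} \<subseteq> line_to_circ k ` {0..<3 * k - 1}"
      using line_to_circ_circ_to_line circ_to_line_less
      by (metis atLeastLessThan_iff image_eqI subsetI zero_le)
  qed (use line_to_circ_less in auto)
  then show ?thesis
    unfolding is_blowup_of_def andrasfai_vertices_def
    using andrasfai_edge_line_to_circ by (intro exI[of _ "line_to_circ k"]) auto
qed

lemma andrasfai_is_blowup_of_line: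
  "is_blowup_of (andrasfai_vertices k) (andrasfai_edge k) {0..<3 * k - 1} lin_adj"
proof -
  have inverse: "line_to_circ k (circ_to_line k i) = i" if "i \<in> {0..<3 * k - 1}" for i
    using line_to_circ_circ_to_line that by simp
  have "inj_on (circ_to_line k) {0..<3 * k - 1}"
    by (rule inj_on_inverseI[where g = "line_to_circ k"]) (rule inverse)
  then have "circ_to_line k ` {0..<3 * k - 1} = {0..<3 * k - 1}"
    using circ_to_line_less by (intro endo_inj_surj) auto
  moreover have "andrasfai_edge k i j \<longleftrightarrow> lin_adj (circ_to_line k i) (circ_to_line k j)"
    if "i \<in> {0..<3 * k - 1}" "j \<in> {0..<3 * k - 1}" for i j
    using andrasfai_edge_line_to_circ[of "circ_to_line k i" k "circ_to_line k j"] inverse that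
      circ_to_line_less by simp
  ultimately show ?thesis
    unfolding is_blowup_of_def andrasfai_vertices_def by (intro exI[of _ "circ_to_line k"]) auto
qed

lemma blowup_andrasfai_no_induced_C6:
  assumes "is_blowup_of V E (andrasfai_vertices k) (andrasfai_edge k)"
  shows "\<not> has_induced_C6 V E"
  using has_induced_C6_blowup[OF is_blowup_of_trans[OF assms andrasfai_is_blowup_of_line]]
    no_induced_C6_lin_adj by blast

section \<open>Maximal triangle-free graphs without induced hexagons\<close>

locale mtf_graph =
  fixes V :: "'a set" and E :: "'a \<Rightarrow> 'a \<Rightarrow> bool"
  assumes simple: "simple_graph V E"
    and maximal: "maximal_triangle_free V E"
begin

definition nbhd :: "'a \<Rightarrow> 'a set" where
  "nbhd x = {y. E x y}"

lemma finite_vertices: "finite V"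
  using simple unfolding simple_graph_def by blast

lemma adj_in_V: "E x y \<Longrightarrow> x \<in> V" "E x y \<Longrightarrow> y \<in> V"
  using simple unfolding simple_graph_def by blast+

lemma adj_sym: "E x y \<Longrightarrow> E y x"
  using simple unfolding simple_graph_def by blast

lemma adj_irrefl: "\<not> E x x"
  using simple unfolding simple_graph_def by blast

lemma no_triangle: "E x y \<Longrightarrow> E y z \<Longrightarrow> E x z \<Longrightarrow> False"
  using maximal adj_in_V unfolding maximal_triangle_free_def triangle_free_def by metis

lemma common_neighbour: "x \<in> V \<Longrightarrow> y \<in> V \<Longrightarrow> x \<noteq> y \<Longrightarrow> \<not> E x y \<Longrightarrow> \<exists>z. E x z \<and> E y z"
  using maximal unfolding maximal_triangle_free_def by blast

lemma finite_nbhd: "finite (nbhd x)"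
  using finite_subset[OF _ finite_vertices, of "nbhd x"] adj_in_V unfolding nbhd_def by blast

text \<open>Every remaining pair among \<open>x, b\<^sub>1, y, b\<^sub>2, z, b\<^sub>3\<close> would close a triangle, so the
  hexagon \<open>x b\<^sub>1 y b\<^sub>2 z b\<^sub>3\<close> is induced.\<close>
lemma induced_C6_of_private_neighbours:
  assumes "E x b1" "E y b1" "\<not> E z b1" "E y b2" "E z b2" "\<not> E x b2" "E x b3" "E z b3" "\<not> E y b3"
  shows "has_induced_C6 V E"
proof -
  have nonadj: "\<not> E x y" "\<not> E y z" "\<not> E x z" "\<not> E b1 b2" "\<not> E b2 b3" "\<not> E b1 b3"
    using assms no_triangle adj_sym by metis+
  define cs where "cs = [x, b1, y, b2, z, b3]"
  have "distinct cs"
    unfolding cs_def using assms nonadj adj_irrefl adj_sym by auto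
  then have "inj_on (nth cs) {0..<6}"
    by (rule inj_on_nth) (simp add: cs_def)
  moreover have "nth cs ` {0..<6} \<subseteq> V"
    unfolding cs_def using assms adj_in_V by (auto simp: less_Suc_eq numeral_eq_Suc)
  moreover have "E (cs ! i) (cs ! j) \<longleftrightarrow> cyc6_adj i j" if "i < 6" "j < 6" for i j
    using less_6_cases[OF that(1)] less_6_cases[OF that(2)] assms nonadj adj_irrefl adj_sym
    unfolding cs_def by (elim disjE) (simp_all, blast+)
  ultimately show ?thesis
    unfolding has_induced_C6_def by blast
qed

end

locale c6_free_mtf_graph = mtf_graph +
  assumes no_induced_C6: "\<not> has_induced_C6 V E"
begin

lemma no_private_neighbours:
  assumes "E x b1" "E y b1" "\<not> E z b1" "E y b2" "E z b2" "\<not> E x b2" "E x b3" "E z b3" "\<not> E y b3"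
  shows False
  using induced_C6_of_private_neighbours[OF assms] no_induced_C6 by blast

lemma min_common_nbhd_pair_dominates:
  assumes uw: "u \<in> V" "w \<in> V" "u \<noteq> w" "\<not> E u w"
    and min: "\<And>x y. x \<in> V \<Longrightarrow> y \<in> V \<Longrightarrow> x \<noteq> y \<Longrightarrow> \<not> E x y \<Longrightarrow>
      card (nbhd u \<inter> nbhd w) \<le> card (nbhd x \<inter> nbhd y)"
    and v: "E u v" "E w v"
    and a: "a \<in> V" "\<not> E u a" "\<not> E v a"
  shows "E w a"
proof (rule ccontr)
  assume wa: "\<not> E w a"
  have "a \<noteq> u" "a \<noteq> w"
    using a(3) v adj_sym by blast+
  then have min_a: "card (nbhd u \<inter> nbhd w) \<le> card (nbhd x \<inter> nbhd a)" if "x \<in> {u, w}" for x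
    using min[of x a] that uw a wa adj_sym by blast
  have shrink: "card (nbhd x \<inter> nbhd a) < card (nbhd u \<inter> nbhd w)"
    if "x \<in> {u, w}" "nbhd x \<inter> nbhd a \<subseteq> nbhd u \<inter> nbhd w" for x
  proof -
    have "v \<in> nbhd u \<inter> nbhd w" "v \<notin> nbhd a"
      using v a(3) adj_sym unfolding nbhd_def by auto
    with that(2) have "nbhd x \<inter> nbhd a \<subset> nbhd u \<inter> nbhd w"
      by blast
    then show ?thesis
      using finite_nbhd by (intro psubset_card_mono) auto
  qed
  \<comment> \<open>a private common neighbour of \<open>u, a\<close> and one of \<open>w, a\<close> would complete, together
    with \<open>v\<close>, an induced hexagon\<close>
  have "nbhd u \<inter> nbhd a \<subseteq> nbhd w \<or> nbhd w \<inter> nbhd a \<subseteq> nbhd u"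
    using no_private_neighbours[of u v w a] v a(3) adj_sym unfolding nbhd_def by blast
  then show False
    using shrink[of u] shrink[of w] min_a[of u] min_a[of w] by fastforce
qed

lemma exists_dominating_edge:
  assumes "card V \<ge> 2"
  obtains u v where "E u v" "\<And>a b. E a b \<Longrightarrow> E u a \<or> E v a \<or> E u b \<or> E v b"
proof (cases "\<exists>x\<in>V. \<exists>y\<in>V. x \<noteq> y \<and> \<not> E x y")
  case True
  define nonadj where "nonadj p \<longleftrightarrow> fst p \<in> V \<and> snd p \<in> V \<and> fst p \<noteq> snd p \<and> \<not> E (fst p) (snd p)"
    for p
  define common where "common p = card (nbhd (fst p) \<inter> nbhd (snd p))" for p
  obtain p0 where "nonadj p0"
    using True unfolding nonadj_def by auto
  then obtain p where p: "nonadj p" "\<And>p'. nonadj p' \<Longrightarrow> common p \<le> common p'"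
    using ex_has_least_nat[of nonadj p0 common] by blast
  obtain u w where uw: "p = (u, w)"
    by fastforce
  have uw_nonadj: "u \<in> V" "w \<in> V" "u \<noteq> w" "\<not> E u w"
    using p(1) uw unfolding nonadj_def by auto
  have min: "card (nbhd u \<inter> nbhd w) \<le> card (nbhd x \<inter> nbhd y)"
    if "x \<in> V" "y \<in> V" "x \<noteq> y" "\<not> E x y" for x y
    using p(2)[of "(x, y)"] that uw unfolding nonadj_def common_def by simp
  obtain v where v: "E u v" "E w v"
    using common_neighbour[OF uw_nonadj] by blast
  have w_adj: "E w a" if "a \<in> V" "\<not> E u a" "\<not> E v a" for a
    by (rule min_common_nbhd_pair_dominates[OF uw_nonadj min v that])
  have "E u a \<or> E v a \<or> E u b \<or> E v b" if "E a b" for a b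
    using w_adj[of a] w_adj[of b] adj_in_V[OF that] no_triangle that by blast
  then show ?thesis
    using that v(1) by blast
next
  case False
  have "\<not> card V \<le> Suc 0"
    using assms by simp
  then obtain u v where "u \<in> V" "v \<in> V" "u \<noteq> v"
    using card_le_Suc0_iff_eq[OF finite_vertices] by blast
  have adj_all: "E x y" if "x \<in> V" "y \<in> V" "x \<noteq> y" for x y
    using False that by blast
  have "E u a \<or> E u b" if "E a b" for a b
    using that adj_all[OF \<open>u \<in> V\<close> adj_in_V(1)[OF that]] by blast
  then show ?thesis
    using that adj_all[OF \<open>u \<in> V\<close> \<open>v \<in> V\<close> \<open>u \<noteq> v\<close>] by blast
qed

end

section \<open>Proper 3-colourings constant on twins\<close>

locale coloured_c6_free_mtf = c6_free_mtf_graph +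
  fixes col :: "'a \<Rightarrow> nat"
  assumes col_less: "col x < 3"
    and col_proper: "E x y \<Longrightarrow> col x \<noteq> col y"
    and col_twins: "x \<in> V \<Longrightarrow> y \<in> V \<Longrightarrow> nbhd x = nbhd y \<Longrightarrow> col x = col y"
begin

definition colour_nbhd :: "'a \<Rightarrow> nat \<Rightarrow> 'a set" where
  "colour_nbhd x d = {y. E x y \<and> col y = d}"

lemma col_cases:
  obtains "col y = col x" | "col y = succ3 (col x)" | "col x = succ3 (col y)"
  using succ3_cases[OF col_less col_less] by metis

lemma col_third:
  "col a \<noteq> col b \<Longrightarrow> col c \<noteq> col a \<Longrightarrow> col c \<noteq> col b \<Longrightarrow> col d \<noteq> col a \<Longrightarrow> col d \<noteq> col b
   \<Longrightarrow> col c = col d"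
  using third_residue[OF col_less col_less col_less col_less] by blast

lemma colour_nbhd_nested:
  assumes "x \<in> V" "x' \<in> V" "col x = col x'" "d \<noteq> col x"
  shows "colour_nbhd x d \<subseteq> colour_nbhd x' d \<or> colour_nbhd x' d \<subseteq> colour_nbhd x d"
proof (rule ccontr)
  assume "\<not> ?thesis"
  then obtain w w' where w: "E x w" "col w = d" "\<not> E x' w" and w': "E x' w'" "col w' = d" "\<not> E x w'"
    unfolding colour_nbhd_def by auto
  have "w \<noteq> x'" "w' \<noteq> x"
    using w w' assms(3,4) by auto
  then obtain t t' where t: "E w t" "E x' t" and t': "E w' t'" "E x t'"
    using common_neighbour adj_in_V w w' assms(1,2) adj_sym by metis
  have "col t = col t'"
    using col_third[of w x t t'] col_proper[OF t(1)] col_proper[OF t(2)] col_proper[OF t'(1)]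
      col_proper[OF t'(2)] w(2) w'(2) assms(3,4) by auto
  then have "\<not> E t t'" "\<not> E x x'" "\<not> E w' w"
    using col_proper assms(3) w(2) w'(2) by metis+
  then show False
    using no_private_neighbours[of x t' w' t x' w] t t' w w' adj_sym by blast
qed

lemma colour_nbhd_anti:
  assumes "x \<in> V" "x' \<in> V" "col x = col x'" "d < 3" "d' < 3" "d \<noteq> col x" "d' \<noteq> col x"
    "d \<noteq> d'" "colour_nbhd x d \<subseteq> colour_nbhd x' d"
  shows "colour_nbhd x' d' \<subseteq> colour_nbhd x d'"
proof
  fix y assume "y \<in> colour_nbhd x' d'"
  then have y: "E x' y" "col y = d'"
    unfolding colour_nbhd_def by auto
  show "y \<in> colour_nbhd x d'"
  proof (rule ccontr)
    assume "y \<notin> colour_nbhd x d'"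
    then have "\<not> E x y" "x \<noteq> y"
      using y assms(7) unfolding colour_nbhd_def by auto
    then obtain t where t: "E x t" "E y t"
      using common_neighbour[OF assms(1) adj_in_V(2)[OF y(1)]] by blast
    have "col t = d"
      using third_residue[OF col_less col_less col_less assms(4), of x y t] col_proper[OF t(1)]
        col_proper[OF t(2)] y(2) assms(6-8) by auto
    then have "E x' t"
      using assms(9) t(1) unfolding colour_nbhd_def by auto
    then show False
      using no_triangle[OF y(1) t(2)] by blast
  qed
qed

lemma no_rainbow_independent_triple:
  assumes "x \<in> V" "y \<in> V" "z \<in> V" "col x \<noteq> col y" "col y \<noteq> col z" "col x \<noteq> col z"
    "\<not> E x y" "\<not> E y z" "\<not> E x z"
  shows False
proof -
  obtain p where p: "E x p" "E y p"
    using common_neighbour[OF assms(1,2)] assms by auto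
  obtain q where q: "E y q" "E z q"
    using common_neighbour[OF assms(2,3)] assms by auto
  obtain r where r: "E x r" "E z r"
    using common_neighbour[OF assms(1,3)] assms by auto
  have "col p = col z" "col q = col x" "col r = col y"
    using col_third[of x y p z] col_third[of y z q x] col_third[of x z r y]
      col_proper[OF p(1)] col_proper[OF p(2)] col_proper[OF q(1)] col_proper[OF q(2)]
      col_proper[OF r(1)] col_proper[OF r(2)] assms(4-6) by auto
  then have "\<not> E z p" "\<not> E x q" "\<not> E y r"
    using col_proper by metis+
  then show False
    using no_private_neighbours[of x p y z q r] p q r by blast
qed

text \<open>\<open>succ3 (succ3 c)\<close> is the colour below \<open>c\<close>.\<close>
definition down :: "'a \<Rightarrow> 'a set" where
  "down x = colour_nbhd x (succ3 (succ3 (col x)))"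

definition up :: "'a \<Rightarrow> 'a set" where
  "up x = colour_nbhd x (succ3 (col x))"

lemma col_pred_iff: "col x = succ3 (col y) \<longleftrightarrow> col y = succ3 (succ3 (col x))"
  using succ3_cube[OF col_less] succ3_inj[OF col_less succ3_less] by metis

lemma mem_down: "y \<in> down x \<longleftrightarrow> E x y \<and> col x = succ3 (col y)"
  unfolding down_def colour_nbhd_def using col_pred_iff by auto

lemma mem_up: "y \<in> up x \<longleftrightarrow> E x y \<and> col y = succ3 (col x)"
  unfolding up_def colour_nbhd_def by auto

lemma down_nested: "x \<in> V \<Longrightarrow> x' \<in> V \<Longrightarrow> col x = col x' \<Longrightarrow> down x \<subseteq> down x' \<or> down x' \<subseteq> down x"
  unfolding down_def using colour_nbhd_nested succ3_succ3_neq[OF col_less] by metis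

lemma up_nested: "x \<in> V \<Longrightarrow> x' \<in> V \<Longrightarrow> col x = col x' \<Longrightarrow> up x \<subseteq> up x' \<or> up x' \<subseteq> up x"
  unfolding up_def using colour_nbhd_nested succ3_neq[OF col_less] by metis

lemma up_antimono: "x \<in> V \<Longrightarrow> x' \<in> V \<Longrightarrow> col x = col x' \<Longrightarrow> down x \<subseteq> down x' \<Longrightarrow> up x' \<subseteq> up x"
  unfolding down_def up_def
  using colour_nbhd_anti[of x x' "succ3 (succ3 (col x))" "succ3 (col x)"] succ3_less
    succ3_neq[OF col_less] succ3_succ3_neq[OF col_less] succ3_neq[OF succ3_less] by metis

lemma down_antimono: "x \<in> V \<Longrightarrow> x' \<in> V \<Longrightarrow> col x = col x' \<Longrightarrow> up x \<subseteq> up x' \<Longrightarrow> down x' \<subseteq> down x"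
  unfolding down_def up_def
  using colour_nbhd_anti[of x x' "succ3 (col x)" "succ3 (succ3 (col x))"] succ3_less
    succ3_neq[OF col_less] succ3_succ3_neq[OF col_less] succ3_neq[OF succ3_less] by metis

lemma nbhd_eq_down_Un_up: "nbhd x = down x \<union> up x"
proof -
  have "col x = succ3 (col y) \<or> col y = succ3 (col x)" if "E x y" for y
    using col_proper[OF that] by (cases rule: col_cases[of y x]) auto
  then show ?thesis
    unfolding nbhd_def using mem_down mem_up by blast
qed

lemma twins_if_down_eq:
  "x \<in> V \<Longrightarrow> x' \<in> V \<Longrightarrow> col x = col x' \<Longrightarrow> down x = down x' \<Longrightarrow> nbhd x = nbhd x'"
  using up_antimono[of x x'] up_antimono[of x' x] nbhd_eq_down_Un_up by auto

lemma down_eq_if_twins: "x \<in> V \<Longrightarrow> x' \<in> V \<Longrightarrow> nbhd x = nbhd x' \<Longrightarrow> down x = down x'"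
  using col_twins[of x x'] unfolding down_def colour_nbhd_def nbhd_def by auto

lemma up_eq_if_twins: "x \<in> V \<Longrightarrow> x' \<in> V \<Longrightarrow> nbhd x = nbhd x' \<Longrightarrow> up x = up x'"
  using col_twins[of x x'] unfolding up_def colour_nbhd_def nbhd_def by auto

section \<open>The order of twin classes\<close>

text \<open>The linear order of the line picture, in which \<open>col\<close> becomes the position mod 3:
  along an edge the colour goes up by one, and within a colour class the vertex with
  more lower neighbours comes later.\<close>
definition prec :: "'a \<Rightarrow> 'a \<Rightarrow> bool" where
  "prec x y \<longleftrightarrow>
     (if col x = col y then down x \<subset> down y else if col y = succ3 (col x) then E x y else \<not> E x y)"

lemma prec_same_col: "col x = col y \<Longrightarrow> prec x y \<longleftrightarrow> down x \<subset> down y"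
  unfolding prec_def by auto

lemma prec_succ_col:
  assumes "col y = succ3 (col x)"
  shows "prec x y \<longleftrightarrow> E x y"
proof -
  have "col x \<noteq> col y"
    using succ3_neq[OF col_less, of x] assms by auto
  then show ?thesis
    unfolding prec_def using assms by simp
qed

lemma prec_pred_col: "col x = succ3 (col y) \<Longrightarrow> prec x y \<longleftrightarrow> \<not> E x y"
  unfolding prec_def using succ3_neq[OF col_less] succ3_succ3_neq[OF col_less] by metis

lemma prec_irrefl: "\<not> prec x x"
  unfolding prec_def by auto

lemma col_cycle: "col y = succ3 (col x) \<Longrightarrow> col z = succ3 (col y) \<Longrightarrow> col x = succ3 (col z)"
  using succ3_cycle[OF col_less] by blast

lemma prec_trans_same_col:
  assumes "x \<in> V" "y \<in> V" "z \<in> V" "prec x y" "prec y z" "col y = col x"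
  shows "prec x z"
proof (cases rule: col_cases[of z y])
  case 1
  then show ?thesis
    using assms(4-6) prec_same_col by auto
next
  case 2
  have "up y \<subseteq> up x"
    using up_antimono assms prec_same_col by auto
  moreover have "z \<in> up y"
    using 2 assms(5) prec_succ_col mem_up by auto
  ultimately show ?thesis
    using 2 assms(6) prec_succ_col mem_up by auto
next
  case 3
  have "down x \<subseteq> down y"
    using assms(4,6) prec_same_col by auto
  moreover have "z \<notin> down y"
    using 3 assms(5) prec_pred_col mem_down by auto
  ultimately show ?thesis
    using 3 assms(6) prec_pred_col mem_down by auto
qed

lemma prec_trans_succ_col:
  assumes "x \<in> V" "y \<in> V" "z \<in> V" "prec x y" "prec y z" "col y = succ3 (col x)"
  shows "prec x z"
proof (cases rule: col_cases[of z y])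
  case 1
  have "x \<in> down y"
    using assms(4,6) prec_succ_col mem_down adj_sym by auto
  then have "x \<in> down z"
    using 1 assms(5) prec_same_col by auto
  then show ?thesis
    using 1 assms(6) prec_succ_col mem_down adj_sym by auto
next
  case 2
  then have "\<not> E x z"
    using assms(4-6) prec_succ_col no_triangle by blast
  moreover have "col x = succ3 (col z)"
    by (rule col_cycle[OF assms(6) 2])
  ultimately show ?thesis
    using prec_pred_col by blast
next
  case 3
  then have cz: "col z = col x"
    using assms(6) succ3_inj[OF col_less col_less] by simp
  have "y \<in> up x" "y \<notin> up z"
    using 3 assms(4-6) prec_succ_col prec_pred_col mem_up adj_sym by auto
  then have "up z \<subseteq> up x"
    using up_nested[OF assms(1,3) cz[symmetric]] by blast
  then have "down x \<subseteq> down z"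
    using down_antimono[OF assms(3,1) cz] by blast
  moreover have "down x \<noteq> down z"
    using twins_if_down_eq[OF assms(1,3) cz[symmetric]] up_eq_if_twins[OF assms(1,3)]
      \<open>y \<in> up x\<close> \<open>y \<notin> up z\<close> by blast
  ultimately show ?thesis
    using cz prec_same_col by auto
qed

lemma prec_trans_pred_col:
  assumes "x \<in> V" "y \<in> V" "z \<in> V" "prec x y" "prec y z" "col x = succ3 (col y)"
  shows "prec x z"
proof (cases rule: col_cases[of z y])
  case 1
  have "down y \<subseteq> down z"
    using 1 assms(5) prec_same_col by auto
  then have "up z \<subseteq> up y"
    by (rule up_antimono[OF assms(2,3) 1[symmetric]])
  moreover have "\<not> E y x"
    using assms(4) prec_pred_col[OF assms(6)] adj_sym by blast
  ultimately have "x \<notin> up z"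
    using mem_up by blast
  then have "\<not> E x z"
    using 1 assms(6) mem_up adj_sym by auto
  then show ?thesis
    using 1 assms(6) prec_pred_col by auto
next
  case 2
  then have cz: "col z = col x"
    using assms(6) by simp
  have "y \<in> down z" "y \<notin> down x"
    using 2 assms(4-6) prec_succ_col prec_pred_col mem_down adj_sym by auto
  then have "down x \<subset> down z"
    using down_nested[OF assms(1,3) cz[symmetric]] by blast
  then show ?thesis
    using cz prec_same_col by auto
next
  case 3
  then have cz: "col z = succ3 (col x)"
    by (rule col_cycle[OF _ assms(6)])
  have "E x z"
  proof (rule ccontr)
    assume "\<not> E x z"
    moreover have "col x \<noteq> col y" "col y \<noteq> col z" "col x \<noteq> col z"
      using 3 cz assms(6) succ3_neq[OF col_less, of x] succ3_neq[OF col_less, of y]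
        succ3_neq[OF col_less, of z] by auto
    ultimately show False
      using no_rainbow_independent_triple[OF assms(1-3)] 3 assms(4-6) prec_pred_col by blast
  qed
  then show ?thesis
    using cz prec_succ_col by auto
qed

lemma prec_trans:
  assumes "x \<in> V" "y \<in> V" "z \<in> V" "prec x y" "prec y z"
  shows "prec x z"
  by (cases rule: col_cases[of y x])
    (fact prec_trans_same_col[OF assms] prec_trans_succ_col[OF assms] prec_trans_pred_col[OF assms])+

lemma prec_total:
  assumes "x \<in> V" "y \<in> V"
  shows "prec x y \<or> prec y x \<or> nbhd x = nbhd y"
proof (cases rule: col_cases[of y x])
  case 1
  then have "down x \<subset> down y \<or> down y \<subset> down x \<or> down x = down y"
    using down_nested[OF assms 1[symmetric]] by blast
  then show ?thesis
    using twins_if_down_eq[OF assms 1[symmetric]] prec_same_col 1 by auto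
next
  case 2
  then show ?thesis
    using prec_succ_col[OF 2] prec_pred_col[OF 2] adj_sym by blast
next
  case 3
  then show ?thesis
    using prec_succ_col[OF 3] prec_pred_col[OF 3] adj_sym by blast
qed

lemma prec_twin_left:
  assumes "x \<in> V" "x' \<in> V" "nbhd x = nbhd x'"
  shows "prec x y \<longleftrightarrow> prec x' y"
proof -
  have "col x = col x'" "down x = down x'" "E x y \<longleftrightarrow> E x' y"
    using col_twins[OF assms] down_eq_if_twins[OF assms] assms(3) unfolding nbhd_def by auto
  then show ?thesis
    unfolding prec_def by simp
qed

lemma prec_twin_right:
  assumes "x \<in> V" "x' \<in> V" "nbhd x = nbhd x'"
  shows "prec y x \<longleftrightarrow> prec y x'"
proof -
  have "col x = col x'" "down x = down x'" "E y x \<longleftrightarrow> E y x'"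
    using col_twins[OF assms] down_eq_if_twins[OF assms] assms(3) adj_sym unfolding nbhd_def
    by blast+
  then show ?thesis
    unfolding prec_def by simp
qed

lemma prec_gap:
  assumes "x \<in> V" "y \<in> V" "prec x y" "col y \<noteq> succ3 (col x)"
  shows "\<exists>w\<in>V. col w = succ3 (col x) \<and> prec x w \<and> prec w y"
proof (cases rule: col_cases[of y x])
  case 1
  then have "down x \<subset> down y"
    using assms(3) prec_same_col by auto
  have "\<not> up x \<subseteq> up y"
    using down_antimono[OF assms(1,2) 1[symmetric]] \<open>down x \<subset> down y\<close> by blast
  then obtain w where "w \<in> up x" "w \<notin> up y"
    by blast
  then have w: "E x w" "col w = succ3 (col x)" "\<not> E w y"
    using 1 mem_up adj_sym by auto
  then have "prec x w" "prec w y"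
    using 1 prec_succ_col prec_pred_col by auto
  then show ?thesis
    using w adj_in_V(2) by blast
next
  case 2
  then show ?thesis
    using assms(4) by blast
next
  case 3
  then have "\<not> E x y" "col x \<noteq> col y"
    using assms(3) prec_pred_col succ3_neq[OF col_less] by auto
  then obtain w where w: "E x w" "E y w"
    using common_neighbour[OF assms(1,2)] by blast
  have "col w \<noteq> col x" "col w \<noteq> col y"
    using col_proper w by metis+
  moreover have "col x \<noteq> succ3 (col w)"
    using \<open>col w \<noteq> col y\<close> 3 succ3_inj[OF col_less col_less, of w y] by auto
  ultimately have cw: "col w = succ3 (col x)"
    by (cases rule: col_cases[of w x]) auto
  then have "col y = succ3 (col w)"
    using 3 col_cycle by blast
  then have "prec x w" "prec w y"
    using cw w prec_succ_col adj_sym by auto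
  then show ?thesis
    using cw w(1) adj_in_V(2) by blast
qed

end

section \<open>Ranks\<close>

lemma card_image_eq_if_same_fibres:
  assumes "\<And>x y. x \<in> A \<Longrightarrow> y \<in> A \<Longrightarrow> f x = f y \<longleftrightarrow> g x = g y"
  shows "card (f ` A) = card (g ` A)"
proof -
  have g_inv: "g (inv_into A f (f x)) = g x" if "x \<in> A" for x
    using assms[of "inv_into A f (f x)" x] that inv_into_into[of "f x" f A] f_inv_into_f[of "f x" f A]
    by auto
  have "bij_betw (\<lambda>z. g (inv_into A f z)) (f ` A) (g ` A)"
    unfolding bij_betw_def inj_on_def using g_inv assms by (auto simp: image_iff)
  then show ?thesis
    by (rule bij_betw_same_card)
qed

context coloured_c6_free_mtf
begin

definition rank :: "'a \<Rightarrow> nat" where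
  "rank x = card (nbhd ` {y \<in> V. prec y x})"

definition n_classes :: nat where
  "n_classes = card (nbhd ` V)"

lemma rank_strict_mono:
  assumes "x \<in> V" "y \<in> V" "prec x y"
  shows "rank x < rank y"
proof -
  have "nbhd ` {z \<in> V. prec z x} \<subseteq> nbhd ` {z \<in> V. prec z y}"
    using prec_trans[of _ x y] assms by blast
  moreover have "nbhd x \<in> nbhd ` {z \<in> V. prec z y}"
    using assms by blast
  moreover have "nbhd x \<notin> nbhd ` {z \<in> V. prec z x}"
    using prec_twin_left[OF _ assms(1)] prec_irrefl by blast
  ultimately have "nbhd ` {z \<in> V. prec z x} \<subset> nbhd ` {z \<in> V. prec z y}"
    by blast
  then show ?thesis
    unfolding rank_def using finite_vertices by (intro psubset_card_mono) auto
qed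

lemma rank_twin:
  assumes "x \<in> V" "y \<in> V" "nbhd x = nbhd y"
  shows "rank x = rank y"
proof -
  have "{z \<in> V. prec z x} = {z \<in> V. prec z y}"
    using prec_twin_right[OF assms] by blast
  then show ?thesis
    unfolding rank_def by simp
qed

lemma rank_less_iff:
  assumes "x \<in> V" "y \<in> V"
  shows "rank x < rank y \<longleftrightarrow> prec x y"
proof
  assume "rank x < rank y"
  then show "prec x y"
    using prec_total[OF assms] rank_strict_mono[OF assms(2,1)] rank_twin[OF assms] by auto
qed (rule rank_strict_mono[OF assms])

lemma rank_eq_iff:
  assumes "x \<in> V" "y \<in> V"
  shows "rank x = rank y \<longleftrightarrow> nbhd x = nbhd y"
proof
  assume "rank x = rank y"
  then show "nbhd x = nbhd y"
    using prec_total[OF assms] rank_strict_mono[OF assms] rank_strict_mono[OF assms(2,1)] by auto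
qed (rule rank_twin[OF assms])

lemma rank_less_n_classes:
  assumes "x \<in> V"
  shows "rank x < n_classes"
proof -
  have "nbhd ` {z \<in> V. prec z x} \<subseteq> nbhd ` V - {nbhd x}"
    using prec_twin_left[OF _ assms] prec_irrefl by blast
  then have "rank x \<le> card (nbhd ` V - {nbhd x})"
    unfolding rank_def using finite_vertices by (intro card_mono) auto
  also have "\<dots> < n_classes"
    unfolding n_classes_def using assms finite_vertices by (intro psubset_card_mono) auto
  finally show ?thesis .
qed

lemma rank_image: "rank ` V = {0..<n_classes}"
proof -
  have "card (rank ` V) = n_classes"
    unfolding n_classes_def using rank_eq_iff by (rule card_image_eq_if_same_fibres)
  moreover have "rank ` V \<subseteq> {0..<n_classes}"
    using rank_less_n_classes by auto
  ultimately show ?thesis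
    using card_subset_eq[of "{0..<n_classes}" "rank ` V"] by simp
qed

lemma col_rank_Suc:
  assumes "x \<in> V" "y \<in> V" "rank y = Suc (rank x)"
  shows "col y = succ3 (col x)"
proof (rule ccontr)
  assume "col y \<noteq> succ3 (col x)"
  moreover have "prec x y"
    using rank_less_iff[OF assms(1,2)] assms(3) by simp
  ultimately obtain w where "w \<in> V" "prec x w" "prec w y"
    using prec_gap[OF assms(1,2)] by blast
  then show False
    using rank_strict_mono[OF assms(1)] rank_strict_mono[OF _ assms(2)] assms(3) by fastforce
qed

end

locale anchored_colouring = coloured_c6_free_mtf +
  fixes u v :: 'a
  assumes u_in_V: "u \<in> V" and v_in_V: "v \<in> V"
    and col_u: "col u = 0" and col_v: "col v = 1"
    and u_least: "\<not> prec x u" and v_greatest: "\<not> prec v x"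
begin

lemma rank_mod_3: "x \<in> V \<Longrightarrow> rank x mod 3 = col x"
proof (induction "rank x" arbitrary: x)
  case 0
  then have "\<not> prec u x"
    using rank_strict_mono[OF u_in_V] by fastforce
  then have "nbhd u = nbhd x"
    using prec_total[OF u_in_V 0(2)] u_least by blast
  then show ?case
    using col_twins[OF u_in_V 0(2)] col_u 0(1) by simp
next
  case (Suc n)
  have "n \<in> rank ` V"
    using rank_image rank_less_n_classes[OF Suc(3)] Suc(2) by simp
  then obtain y where y: "y \<in> V" "rank y = n"
    by blast
  then have "col x = succ3 (col y)"
    using col_rank_Suc[OF y(1) Suc(3)] Suc(2) by simp
  also have "\<dots> = succ3 (n mod 3)"
    using Suc(1)[OF y(2)[symmetric] y(1)] y(2) by simp
  finally show ?case
    using Suc(2) succ3_mod by simp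
qed

lemma rank_v: "rank v = n_classes - 1"
proof -
  have "n_classes - 1 \<in> rank ` V"
    using rank_image rank_less_n_classes[OF v_in_V] by simp
  then obtain x where "x \<in> V" "rank x = n_classes - 1"
    by (metis imageE)
  moreover have "rank x \<le> rank v" if "x \<in> V" for x
    using prec_total[OF that v_in_V] v_greatest rank_strict_mono[OF that v_in_V]
      rank_twin[OF that v_in_V] by fastforce
  ultimately show ?thesis
    using rank_less_n_classes[OF v_in_V] by fastforce
qed

lemma n_classes_mod_3: "n_classes mod 3 = 2"
proof -
  have "(n_classes - 1) mod 3 = 1" "n_classes > 0"
    using rank_mod_3[OF v_in_V] rank_v col_v rank_less_n_classes[OF v_in_V] by simp_all
  then show ?thesis
    by (cases n_classes) (simp_all add: mod_Suc)
qed

lemma adj_iff_lin_adj_rank: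
  assumes "x \<in> V" "y \<in> V"
  shows "E x y \<longleftrightarrow> lin_adj (rank x) (rank y)"
proof (cases rule: col_cases[of y x])
  case 1
  then show ?thesis
    using col_proper not_lin_adj_same_mod rank_mod_3 assms by metis
next
  case 2
  then have "rank y mod 3 = succ3 (rank x mod 3)"
    using rank_mod_3 assms by simp
  then show ?thesis
    using lin_adj_iff_less rank_less_iff[OF assms] prec_succ_col[OF 2] by simp
next
  case 3
  then have "rank x mod 3 = succ3 (rank y mod 3)"
    using rank_mod_3 assms by simp
  then show ?thesis
    using lin_adj_iff_less rank_less_iff[OF assms(2,1)] prec_succ_col[OF 3] adj_sym lin_adj_sym
    by metis
qed

lemma is_blowup_of_line: "is_blowup_of V E {0..<n_classes} lin_adj"
  unfolding is_blowup_of_def using rank_image adj_iff_lin_adj_rank by blast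

end

section \<open>The colouring by a dominating edge\<close>

locale dominating_edge = c6_free_mtf_graph +
  fixes u v :: 'a
  assumes edge: "E u v"
    and dominating: "E a b \<Longrightarrow> E u a \<or> E v a \<or> E u b \<or> E v b"
begin

text \<open>Colour 2 is independent because \<open>uv\<close> dominates every edge.\<close>
definition dom_col :: "'a \<Rightarrow> nat" where
  "dom_col x = (if E v x then 0 else if E u x then 1 else 2)"

sublocale coloured_c6_free_mtf V E dom_col
proof
  show "dom_col x < 3" for x
    unfolding dom_col_def by simp
  show "dom_col x \<noteq> dom_col y" if "E x y" for x y
  proof
    assume "dom_col x = dom_col y"
    then have "(E v x \<and> E v y) \<or> (E u x \<and> E u y) \<or> \<not> (E u x \<or> E v x \<or> E u y \<or> E v y)"
      unfolding dom_col_def by (auto split: if_splits)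
    then show False
      using no_triangle[of v x y] no_triangle[of u x y] that dominating[OF that] by blast
  qed
  show "dom_col x = dom_col y" if "nbhd x = nbhd y" for x y
  proof -
    have "E v x \<longleftrightarrow> E v y" "E u x \<longleftrightarrow> E u y"
      using that adj_sym unfolding nbhd_def set_eq_iff mem_Collect_eq by blast+
    then show ?thesis
      unfolding dom_col_def by simp
  qed
qed

lemma dom_col_u: "dom_col u = 0" and dom_col_v: "dom_col v = 1"
  unfolding dom_col_def using edge adj_sym adj_irrefl by auto

lemma not_prec_u: "\<not> prec x u"
proof (cases "E v x")
  case True
  have "y \<notin> down u" for y
  proof
    assume "y \<in> down u"
    then have "E u y" "succ3 (dom_col y) = 0"
      using mem_down dom_col_u by auto
    then show False
      unfolding dom_col_def succ3_def by (auto split: if_splits)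
  qed
  then have "down u = {}"
    by blast
  then show ?thesis
    using True dom_col_u prec_same_col unfolding dom_col_def by auto
next
  case False
  then show ?thesis
    using dom_col_u prec_succ_col prec_pred_col edge adj_sym
    by (cases "E u x") (auto simp: dom_col_def succ3_def)
qed

lemma not_prec_v: "\<not> prec v x"
proof (cases "\<not> E v x \<and> E u x")
  case True
  then have col_x: "dom_col x = 1"
    unfolding dom_col_def by simp
  have "down x \<subseteq> down v"
  proof
    fix y assume "y \<in> down x"
    then have "E x y" "succ3 (dom_col y) = 1"
      using mem_down col_x by auto
    then have "E v y" "succ3 (dom_col y) = 1"
      unfolding dom_col_def succ3_def by (auto split: if_splits)
    then show "y \<in> down v"
      using mem_down dom_col_v by simp
  qed
  then show ?thesis
    using True dom_col_v prec_same_col unfolding dom_col_def by auto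
next
  case False
  then show ?thesis
    using dom_col_v prec_succ_col prec_pred_col
    by (cases "E v x") (auto simp: dom_col_def succ3_def)
qed

sublocale anchored_colouring V E dom_col u v
  using adj_in_V edge dom_col_u dom_col_v not_prec_u not_prec_v by unfold_locales auto

end

context c6_free_mtf_graph
begin

lemma is_blowup_of_andrasfai:
  assumes "card V \<ge> 2"
  shows "\<exists>k\<ge>1. is_blowup_of V E (andrasfai_vertices k) (andrasfai_edge k)"
proof -
  obtain u v where "E u v" "\<And>a b. E a b \<Longrightarrow> E u a \<or> E v a \<or> E u b \<or> E v b"
    using exists_dominating_edge assms by blast
  then interpret dominating_edge V E u v
    by unfold_locales
  define k where "k = Suc n_classes div 3"
  have "n_classes = 3 * k - 1" "k \<ge> 1"
    using n_classes_mod_3 unfolding k_def by presburger+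
  moreover have "is_blowup_of V E {0..<3 * k - 1} lin_adj"
    using is_blowup_of_line calculation by simp
  ultimately show ?thesis
    using is_blowup_of_trans[OF _ line_is_blowup_of_andrasfai] by blast
qed

end

theorem proposition3p5:
  fixes V :: "'a set" and E :: "'a \<Rightarrow> 'a \<Rightarrow> bool"
  assumes "simple_graph V E"
    and "maximal_triangle_free V E"
    and "card V \<ge> 2"
  shows "\<not> has_induced_C6 V E \<longleftrightarrow>
         (\<exists>k\<ge>1. is_blowup_of V E (andrasfai_vertices k) (andrasfai_edge k))"
proof
  assume "\<not> has_induced_C6 V E"
  with assms(1,2) interpret c6_free_mtf_graph V E
    by unfold_locales
  show "\<exists>k\<ge>1. is_blowup_of V E (andrasfai_vertices k) (andrasfai_edge k)"
    using is_blowup_of_andrasfai assms(3) .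
next
  assume "\<exists>k\<ge>1. is_blowup_of V E (andrasfai_vertices k) (andrasfai_edge k)"
  then show "\<not> has_induced_C6 V E"
    using blowup_andrasfai_no_induced_C6 by blast
qed

end
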